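(* For $I\subseteq\mathbb{N}$ and unitaries $u=(u(i))_{i\in\mathbb{N}}$, $v=(v(i))_{i\in\mathbb{N}}$ of $\ell^\infty(M_m(\mathbb{C}))$, let $\Delta_I(u,v)=\sup_{i,j\in I}\|u(i)u(j)^*-v(i)v(j)^*\|$. Then for all $I\subseteq\mathbb{N}$ and all such $u,v$: (1) $\Delta_I(u,v)\le 2\sup_{i\in I}\|u(i)-v(i)\|$; (2) $\Delta_I(u,v)\ge\sup_{j\in I}\|u(j)-v(j)\|-\inf_{i\in I}\|u(i)-v(i)\|$; in particular, if $u(k)=v(k)$ for some $k\in I$, then $\Delta_I(u,v)\ge\sup_{j\in I}\|u(j)-v(j)\|$; (3) if $w$ is a unitary in $M_m(\mathbb{C})$, then $\Delta_I(u,v)=\Delta_I(u,vw)$, where $(vw)(i)=v(i)w$; (4) if $J\subseteq\mathbb{N}$ and $I\cap J\neq\emptyset$, then $\Delta_{I\cup J}(u,v)\le\Delta_I(u,v)+\Delta_J(u,v)$; (5) $\inf_{w}\sup_{i\in I}\|u(i)-v(i)w\|\le\Delta_I(u,v)\le 2\inf_{w}\sup_{i\in I}\|u(i)-v(i)w\|$, where $w$ ranges over the unitary group of $M_m(\mathbb{C})$.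
   Context: $m\ge1$; $\ell^\infty(M_m(\mathbb{C}))$ is the $\mathrm{C}^*$-algebra of norm-bounded sequences of $m\times m$ complex matrices, so a unitary $u$ of it is a sequence $(u(i))_{i\in\mathbb{N}}$ of unitary matrices; norms are operator norms on $M_m(\mathbb{C})$. *)

theory Defs
  imports "HOL-Analysis.Analysis"
begin

text \<open>m x m complex matrices are modelled as complex^'n^'n for a finite type 'n
  with CARD('n) = m (so m >= 1 automatically).\<close>

definition cadj :: "complex^'n^'n \<Rightarrow> complex^'n^'n" where
  "cadj A = (\<chi> i j. cnj (A $ j $ i))"

definition unitary_mat :: "complex^'n::finite^'n \<Rightarrow> bool" where
  "unitary_mat A \<longleftrightarrow> A ** cadj A = mat 1 \<and> cadj A ** A = mat 1"

definition opnorm :: "complex^'n::finite^'n \<Rightarrow> real" where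
  "opnorm A = onorm (\<lambda>x::complex^'n. A *v x)"

definition Delta :: "nat set \<Rightarrow> (nat \<Rightarrow> complex^'n::finite^'n) \<Rightarrow> (nat \<Rightarrow> complex^'n^'n) \<Rightarrow> ereal" where
  "Delta I u v = (SUP i\<in>I. SUP j\<in>I. ereal (opnorm (u i ** cadj (u j) - v i ** cadj (v j))))"

end

theory Submission
  imports Defs
begin

text \<open>The operator norm is invariant under multiplication by unitaries on either side, so for
  unitaries B and C the identity A B - C D = (A - C) B + C (B - D) gives
  ||A B - C D|| \<le> ||A - C|| + ||B - D||. Applied to suitable factorisations of the products,
  this shows that d(i,j) = ||u(i) u(j)^* - v(i) v(j)^*|| satisfies the triangle inequality,
  d(i,j) \<le> e(i) + e(j) and e(j) \<le> d(j,i) + e(i), where e(i) = ||u(i) - v(i)||; parts (1), (2) and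
  (4) follow by taking suprema. Delta sees v only through the products v(i) v(j)^*, which gives (3),
  and (5) follows from (1) and (3) together with the choice w = v(k)^* u(k), for which
  ||u(i) - v(i) w|| = d(i,k).\<close>

lemma inner_mult_left_complex: "inner (a * b) c = inner b (cnj a * (c::complex))"
  by (simp add: inner_complex_def algebra_simps)

lemma inner_matrix_vector_mult_cadj:
  "inner (A *v x) y = inner x (cadj A *v (y::complex^'n::finite))"
proof -
  have "inner (A *v x) y = (\<Sum>i\<in>UNIV. \<Sum>j\<in>UNIV. inner (x $ j) (cnj (A $ i $ j) * y $ i))"
    by (simp add: inner_vec_def matrix_vector_mult_def inner_sum_left inner_mult_left_complex)
  also have "\<dots> = (\<Sum>j\<in>UNIV. \<Sum>i\<in>UNIV. inner (x $ j) (cnj (A $ i $ j) * y $ i))"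
    by (rule sum.swap)
  also have "\<dots> = inner x (cadj A *v y)"
    by (simp add: inner_vec_def matrix_vector_mult_def cadj_def inner_sum_right)
  finally show ?thesis .
qed

lemma norm_unitary_mat_vector_mult:
  assumes "unitary_mat U"
  shows "norm (U *v x) = norm x"
proof -
  have "inner (U *v x) (U *v x) = inner x x"
    using assms by (simp add: inner_matrix_vector_mult_cadj matrix_vector_mul_assoc unitary_mat_def)
  then show ?thesis
    by (simp add: dot_square_norm power2_eq_iff_nonneg)
qed

lemma opnorm_nonneg: "0 \<le> opnorm A"
  unfolding opnorm_def by (rule onorm_pos_le) simp

lemma opnorm_0 [simp]: "opnorm 0 = 0"
  by (simp add: opnorm_def onorm_zero)

lemma opnorm_triangle: "opnorm (A + B) \<le> opnorm A + opnorm B"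
  unfolding opnorm_def matrix_vector_mult_add_rdistrib by (rule onorm_triangle) simp_all

lemma opnorm_minus_commute: "opnorm (A - B) = opnorm (B - A)"
proof -
  have "(\<lambda>x. (B - A) *v x) = (\<lambda>x. - ((A - B) *v x))"
    by (rule ext) (simp add: matrix_vector_mult_diff_rdistrib)
  then show ?thesis
    unfolding opnorm_def by (metis onorm_neg)
qed

lemma opnorm_unitary_mul_left:
  assumes "unitary_mat U"
  shows "opnorm (U ** A) = opnorm A"
  unfolding opnorm_def onorm_def
  by (simp add: matrix_vector_mul_assoc[symmetric] norm_unitary_mat_vector_mult[OF assms])

lemma opnorm_mul_unitary_right:
  assumes "unitary_mat U"
  shows "opnorm (A ** U) = opnorm A"
proof -
  have "y = U *v (cadj U *v y)" for y
    using assms by (simp add: matrix_vector_mul_assoc unitary_mat_def)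
  then have surj: "range (\<lambda>x. U *v x) = UNIV"
    by blast
  have "(SUP x. norm ((A ** U) *v x) / norm x) = (SUP x. norm (A *v (U *v x)) / norm (U *v x))"
    by (simp add: matrix_vector_mul_assoc[symmetric] norm_unitary_mat_vector_mult[OF assms])
  also have "\<dots> = (SUP y\<in>range (\<lambda>x. U *v x). norm (A *v y) / norm y)"
    by (simp add: image_comp)
  also have "\<dots> = (SUP y. norm (A *v y) / norm y)"
    by (simp only: surj)
  finally show ?thesis
    unfolding opnorm_def onorm_def .
qed

lemma cadj_matrix_mul: "cadj (A ** B) = cadj B ** cadj (A::complex^'n::finite^'n)"
  by (simp add: vec_eq_iff matrix_matrix_mult_def cadj_def mult.commute)

lemma cadj_cadj [simp]: "cadj (cadj A) = A"
  by (simp add: vec_eq_iff cadj_def)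

lemma cadj_mat_1 [simp]: "cadj (mat 1 :: complex^'n::finite^'n) = mat 1"
  by (simp add: vec_eq_iff cadj_def mat_def)

lemma unitary_mat_1: "unitary_mat (mat 1 :: complex^'n::finite^'n)"
  by (simp add: unitary_mat_def)

lemma unitary_mat_cadj: "unitary_mat A \<Longrightarrow> unitary_mat (cadj A)"
  by (simp add: unitary_mat_def)

lemma unitary_mat_mul:
  "unitary_mat A \<Longrightarrow> unitary_mat B \<Longrightarrow> unitary_mat (A ** (B::complex^'n::finite^'n))"
  unfolding unitary_mat_def cadj_matrix_mul by (metis matrix_mul_assoc matrix_mul_rid)

lemma matrix_mul_diff_left: "A ** (B - C) = A ** B - A ** (C::complex^'n::finite^'n)"
  by (simp add: vec_eq_iff matrix_matrix_mult_def sum_subtractf right_diff_distrib)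

lemma matrix_mul_diff_right: "(A - B) ** C = A ** C - B ** (C::complex^'n::finite^'n)"
  by (simp add: vec_eq_iff matrix_matrix_mult_def sum_subtractf left_diff_distrib)

lemma opnorm_cadj_diff:
  assumes "unitary_mat A" and "unitary_mat B"
  shows "opnorm (cadj A - cadj B) = opnorm (A - B)"
proof -
  have "cadj A - cadj B = cadj A ** ((B - A) ** cadj B)"
    using assms by (simp add: matrix_mul_diff_left matrix_mul_diff_right matrix_mul_assoc unitary_mat_def)
  then show ?thesis
    using assms by (simp add: opnorm_unitary_mul_left opnorm_mul_unitary_right unitary_mat_cadj
        opnorm_minus_commute)
qed

lemma opnorm_mul_diff_mul_le:
  assumes "unitary_mat B" and "unitary_mat C"
  shows "opnorm (A ** B - C ** D) \<le> opnorm (A - C) + opnorm (B - D)"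
proof -
  have "A ** B - C ** D = (A - C) ** B + C ** (B - D)"
    by (simp add: matrix_mul_diff_left matrix_mul_diff_right)
  then have "opnorm (A ** B - C ** D) \<le> opnorm ((A - C) ** B) + opnorm (C ** (B - D))"
    by (simp only: opnorm_triangle)
  then show ?thesis
    using assms by (simp add: opnorm_unitary_mul_left opnorm_mul_unitary_right)
qed

lemma opnorm_mul_cadj_diff_le:
  assumes "unitary_mat Ui" "unitary_mat Uj" "unitary_mat Vi" "unitary_mat Vj"
  shows "opnorm (Ui ** cadj Uj - Vi ** cadj Vj) \<le> opnorm (Ui - Vi) + opnorm (Uj - Vj)"
  using opnorm_mul_diff_mul_le[of "cadj Uj" Vi Ui "cadj Vj"] opnorm_cadj_diff[of Uj Vj] assms
  by (simp add: unitary_mat_cadj)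

lemma opnorm_diff_le_mul_cadj_diff:
  assumes "unitary_mat Ui" "unitary_mat Uj" "unitary_mat Vi" "unitary_mat Vj"
  shows "opnorm (Uj - Vj) \<le> opnorm (Uj ** cadj Ui - Vj ** cadj Vi) + opnorm (Ui - Vi)"
proof -
  have "Uj - Vj = (Uj ** cadj Ui) ** Ui - (Vj ** cadj Vi) ** Vi"
    using assms by (simp add: matrix_mul_assoc[symmetric] unitary_mat_def)
  then show ?thesis
    using opnorm_mul_diff_mul_le[of Ui "Vj ** cadj Vi" "Uj ** cadj Ui" Vi] assms
    by (simp add: unitary_mat_mul unitary_mat_cadj)
qed

lemma opnorm_mul_cadj_diff_triangle:
  assumes "unitary_mat Ui" "unitary_mat Uj" "unitary_mat Uk" "unitary_mat Vi" "unitary_mat Vj" "unitary_mat Vk"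
  shows "opnorm (Ui ** cadj Uj - Vi ** cadj Vj)
    \<le> opnorm (Ui ** cadj Uk - Vi ** cadj Vk) + opnorm (Uk ** cadj Uj - Vk ** cadj Vj)"
proof -
  have "Ui ** cadj Uj - Vi ** cadj Vj
      = (Ui ** cadj Uk) ** (Uk ** cadj Uj) - (Vi ** cadj Vk) ** (Vk ** cadj Vj)"
    using assms by (simp add: matrix_mul_assoc) (simp add: matrix_mul_assoc[symmetric] unitary_mat_def)
  then show ?thesis
    using opnorm_mul_diff_mul_le[of "Uk ** cadj Uj" "Vi ** cadj Vk" "Ui ** cadj Uk" "Vk ** cadj Vj"] assms
    by (simp add: unitary_mat_mul unitary_mat_cadj)
qed

lemma SUP_pairs_le_twice_SUP:
  fixes d :: "'a \<Rightarrow> 'a \<Rightarrow> real"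
  assumes "\<And>i j. i \<in> I \<Longrightarrow> j \<in> I \<Longrightarrow> d i j \<le> e i + e j"
  shows "(SUP i\<in>I. SUP j\<in>I. ereal (d i j)) \<le> 2 * (SUP i\<in>I. ereal (e i))"
proof (intro SUP_least)
  fix i j assume "i \<in> I" "j \<in> I"
  then have "ereal (d i j) \<le> ereal (e i) + ereal (e j)"
    using assms by simp
  also have "\<dots> \<le> (SUP i\<in>I. ereal (e i)) + (SUP i\<in>I. ereal (e i))"
    using \<open>i \<in> I\<close> \<open>j \<in> I\<close> by (intro add_mono SUP_upper)
  finally show "ereal (d i j) \<le> 2 * (SUP i\<in>I. ereal (e i))"
    by (simp add: mult_2_ereal[simplified])
qed

lemma SUP_diff_INF_le_SUP_pairs:
  fixes d :: "'a \<Rightarrow> 'a \<Rightarrow> real"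
  assumes "\<And>i j. i \<in> I \<Longrightarrow> j \<in> I \<Longrightarrow> e j \<le> d j i + e i"
    and "\<And>i. i \<in> I \<Longrightarrow> 0 \<le> e i"
  shows "(SUP j\<in>I. ereal (e j)) - (INF i\<in>I. ereal (e i)) \<le> (SUP i\<in>I. SUP j\<in>I. ereal (d i j))"
    (is "?S - ?N \<le> ?D")
proof (cases "I = {}")
  case True
  then show ?thesis by (simp add: bot_ereal_def top_ereal_def)
next
  case False
  then obtain k where "k \<in> I" by auto
  have "ereal (d k k) \<le> ?D"
    using \<open>k \<in> I\<close> by (intro SUP_upper2[of k]) auto
  then have "?D \<noteq> -\<infinity>" by auto
  have "?S \<le> ?D + ereal (e i)" if "i \<in> I" for i
  proof (rule SUP_least)
    fix j assume "j \<in> I"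
    have "ereal (e j) \<le> ereal (d j i) + ereal (e i)"
      using assms(1) \<open>i \<in> I\<close> \<open>j \<in> I\<close> by simp
    also have "\<dots> \<le> ?D + ereal (e i)"
      using \<open>i \<in> I\<close> \<open>j \<in> I\<close> by (intro add_right_mono SUP_upper2[of j] SUP_upper2[of i]) auto
    finally show "ereal (e j) \<le> ?D + ereal (e i)" .
  qed
  then have "?S \<le> (INF i\<in>I. ?D + ereal (e i))"
    by (intro INF_greatest)
  also have "\<dots> = ?D + ?N"
    using False \<open>?D \<noteq> -\<infinity>\<close> assms(2) by (intro INF_ereal_add_right) auto
  finally have "?S \<le> ?D + ?N" .
  moreover have "0 \<le> ?N" and "?N \<le> ereal (e k)"
    using assms(2) \<open>k \<in> I\<close> by (auto intro: INF_greatest INF_lower)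
  ultimately show ?thesis
    by (subst ereal_minus_le) auto
qed

lemma SUP_pairs_Un_le:
  fixes d :: "'a \<Rightarrow> 'a \<Rightarrow> real"
  assumes triangle: "\<And>i j k. d i j \<le> d i k + d k j" and "k \<in> I" "k \<in> J"
  shows "(SUP i\<in>I \<union> J. SUP j\<in>I \<union> J. ereal (d i j))
    \<le> (SUP i\<in>I. SUP j\<in>I. ereal (d i j)) + (SUP i\<in>J. SUP j\<in>J. ereal (d i j))"
    (is "_ \<le> ?D I + ?D J")
proof (intro SUP_least)
  have upper: "ereal (d i j) \<le> ?D K" if "i \<in> K" "j \<in> K" for i j K
    using that by (intro SUP_upper2[of i] SUP_upper2[of j]) auto
  have "0 \<le> d k k"
    using triangle[of k k k] by simp
  then have "0 \<le> ?D I" "0 \<le> ?D J"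
    using upper[of k I k] upper[of k J k] \<open>k \<in> I\<close> \<open>k \<in> J\<close> by (meson ereal_less_eq(5) order_trans)+
  fix i j assume "i \<in> I \<union> J" "j \<in> I \<union> J"
  have tri: "ereal (d i j) \<le> ereal (d i k) + ereal (d k j)"
    using triangle[of i j k] by simp
  from \<open>i \<in> I \<union> J\<close> \<open>j \<in> I \<union> J\<close> consider "i \<in> I" "j \<in> I" | "i \<in> J" "j \<in> J" | "i \<in> I" "j \<in> J" | "i \<in> J" "j \<in> I"
    by auto
  then show "ereal (d i j) \<le> ?D I + ?D J"
  proof cases
    case 1
    then show ?thesis
      using upper[of i I j] \<open>0 \<le> ?D J\<close> by (metis add_increasing2)
  next
    case 2
    then show ?thesis
      using upper[of i J j] \<open>0 \<le> ?D I\<close> by (metis add_increasing)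
  next
    case 3
    then have "ereal (d i k) + ereal (d k j) \<le> ?D I + ?D J"
      using \<open>k \<in> I\<close> \<open>k \<in> J\<close> by (intro add_mono upper)
    with tri show ?thesis
      by (rule order_trans)
  next
    case 4
    then have "ereal (d i k) + ereal (d k j) \<le> ?D J + ?D I"
      using \<open>k \<in> I\<close> \<open>k \<in> J\<close> by (intro add_mono upper)
    with tri have "ereal (d i j) \<le> ?D J + ?D I"
      by (rule order_trans)
    then show ?thesis
      by (simp only: add.commute)
  qed
qed

lemma Delta_le_twice_SUP:
  assumes "\<And>i. unitary_mat (u i)" and "\<And>i. unitary_mat (v i)"
  shows "Delta I u v \<le> 2 * (SUP i\<in>I. ereal (opnorm (u i - v i)))"
  unfolding Delta_def using assms by (intro SUP_pairs_le_twice_SUP opnorm_mul_cadj_diff_le)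

lemma SUP_diff_INF_le_Delta:
  assumes "\<And>i. unitary_mat (u i)" and "\<And>i. unitary_mat (v i)"
  shows "(SUP j\<in>I. ereal (opnorm (u j - v j))) - (INF i\<in>I. ereal (opnorm (u i - v i))) \<le> Delta I u v"
  unfolding Delta_def using assms
  by (intro SUP_diff_INF_le_SUP_pairs opnorm_diff_le_mul_cadj_diff opnorm_nonneg)

lemma Delta_mul_unitary_right:
  assumes "unitary_mat w"
  shows "Delta I u (\<lambda>i. v i ** w) = Delta I u v"
proof -
  have "v i ** w ** cadj (v j ** w) = v i ** cadj (v j)" for i j
    using assms by (simp add: cadj_matrix_mul matrix_mul_assoc) (simp add: matrix_mul_assoc[symmetric] unitary_mat_def)
  then show ?thesis
    unfolding Delta_def by simp
qed

lemma Delta_Un_le: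
  assumes "\<And>i. unitary_mat (u i)" and "\<And>i. unitary_mat (v i)" and "I \<inter> J \<noteq> {}"
  shows "Delta (I \<union> J) u v \<le> Delta I u v + Delta J u v"
proof -
  obtain k where "k \<in> I" "k \<in> J"
    using assms(3) by auto
  then show ?thesis
    unfolding Delta_def using assms(1,2) by (intro SUP_pairs_Un_le opnorm_mul_cadj_diff_triangle)
qed

lemma INF_SUP_le_Delta:
  assumes "\<And>i. unitary_mat (u i)" and "\<And>i. unitary_mat (v i)"
  shows "(INF w\<in>{w. unitary_mat w}. SUP i\<in>I. ereal (opnorm (u i - v i ** w))) \<le> Delta I u v"
proof (cases "I = {}")
  case True
  then show ?thesis
    using unitary_mat_1 by (auto intro: INF_lower2)
next
  case False
  then obtain k where "k \<in> I" by auto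
  have "ereal (opnorm (u i - v i ** (cadj (v k) ** u k))) \<le> Delta I u v" if "i \<in> I" for i
  proof -
    have "u i - v i ** (cadj (v k) ** u k) = (u i ** cadj (u k) - v i ** cadj (v k)) ** u k"
      using assms by (simp add: matrix_mul_diff_right matrix_mul_assoc[symmetric] unitary_mat_def)
    then have "opnorm (u i - v i ** (cadj (v k) ** u k)) = opnorm (u i ** cadj (u k) - v i ** cadj (v k))"
      using assms by (simp add: opnorm_mul_unitary_right)
    moreover have "ereal (opnorm (u i ** cadj (u k) - v i ** cadj (v k))) \<le> Delta I u v"
      unfolding Delta_def using \<open>i \<in> I\<close> \<open>k \<in> I\<close> by (intro SUP_upper2[of i] SUP_upper2[of k]) auto
    ultimately show ?thesis
      by simp
  qed
  then have "(SUP i\<in>I. ereal (opnorm (u i - v i ** (cadj (v k) ** u k)))) \<le> Delta I u v"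
    by (rule SUP_least)
  moreover have "unitary_mat (cadj (v k) ** u k)"
    using assms by (simp add: unitary_mat_mul unitary_mat_cadj)
  ultimately show ?thesis
    by (auto intro: INF_lower2)
qed

lemma Delta_le_twice_INF_SUP:
  assumes "\<And>i. unitary_mat (u i)" and "\<And>i. unitary_mat (v i)"
  shows "Delta I u v \<le> 2 * (INF w\<in>{w. unitary_mat w}. SUP i\<in>I. ereal (opnorm (u i - v i ** w)))"
proof -
  have "Delta I u v \<le> 2 * (SUP i\<in>I. ereal (opnorm (u i - v i ** w)))" if "unitary_mat w" for w
    using Delta_le_twice_SUP[of u "\<lambda>i. v i ** w"] Delta_mul_unitary_right[OF that] assms that
    by (simp add: unitary_mat_mul)
  then have "Delta I u v \<le> (INF w\<in>{w. unitary_mat w}. 2 * (SUP i\<in>I. ereal (opnorm (u i - v i ** w))))"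
    by (intro INF_greatest) auto
  also have "\<dots> = 2 * (INF w\<in>{w. unitary_mat w}. SUP i\<in>I. ereal (opnorm (u i - v i ** w)))"
    using ereal_Inf_cmult[of 2 "\<lambda>x. x \<in> (\<lambda>w. SUP i\<in>I. ereal (opnorm (u i - v i ** w))) ` {w. unitary_mat w}"]
    by (simp add: setcompr_eq_image image_image)
  finally show ?thesis .
qed

lemma SUP_le_Delta_if_coincide:
  assumes "\<And>i. unitary_mat (u i)" and "\<And>i. unitary_mat (v i)" and "\<exists>k\<in>I. u k = v k"
  shows "(SUP j\<in>I. ereal (opnorm (u j - v j))) \<le> Delta I u v"
proof -
  from assms(3) obtain k where "k \<in> I" "u k = v k"
    by blast
  then have "(INF i\<in>I. ereal (opnorm (u i - v i))) = 0"
    by (intro antisym INF_lower2[of k] INF_greatest) (simp_all add: opnorm_nonneg)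
  then show ?thesis
    using SUP_diff_INF_le_Delta[of u v I] assms(1,2) by simp
qed

theorem lemma4p2:
  fixes I :: "nat set" and u v :: "nat \<Rightarrow> complex^'n::finite^'n"
  assumes "\<And>i. unitary_mat (u i)" and "\<And>i. unitary_mat (v i)"
  shows
    "Delta I u v \<le> 2 * (SUP i\<in>I. ereal (opnorm (u i - v i)))
   \<and> Delta I u v \<ge> (SUP j\<in>I. ereal (opnorm (u j - v j))) - (INF i\<in>I. ereal (opnorm (u i - v i)))
   \<and> ((\<exists>k\<in>I. u k = v k) \<longrightarrow> Delta I u v \<ge> (SUP j\<in>I. ereal (opnorm (u j - v j))))
   \<and> (\<forall>w. unitary_mat w \<longrightarrow> Delta I u v = Delta I u (\<lambda>i. v i ** w))
   \<and> (\<forall>J. I \<inter> J \<noteq> {} \<longrightarrow> Delta (I \<union> J) u v \<le> Delta I u v + Delta J u v)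
   \<and> (INF w\<in>{w. unitary_mat w}. SUP i\<in>I. ereal (opnorm (u i - v i ** w))) \<le> Delta I u v
   \<and> Delta I u v \<le> 2 * (INF w\<in>{w. unitary_mat w}. SUP i\<in>I. ereal (opnorm (u i - v i ** w)))"
  using assms
  by (intro conjI allI impI Delta_le_twice_SUP SUP_diff_INF_le_Delta SUP_le_Delta_if_coincide
      Delta_mul_unitary_right[symmetric] Delta_Un_le INF_SUP_le_Delta Delta_le_twice_INF_SUP)

end
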